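(* Let $K_{5,6}$ be the complete bipartite graph with bipartition $(X,Y)$, $X=\{x_1,\dots,x_5\}$, $Y=\{y_1,\dots,y_6\}$, and let $S=\{x_1,x_2,y_1,y_2\}$. Then $\kappa^*_{K_{5,6}}(S)=4$.
   Context: For $S\subseteq V(G)$ with $|S|\ge 2$, an $S$-Steiner tree of $G$ is a subtree $T$ of $G$ with $S\subseteq V(T)$ all of whose leaves belong to $S$. A family of $S$-Steiner trees $T_1,\dots,T_k$ is completely independent if for all $1\le p<q\le k$: $E(T_p)\cap E(T_q)=\emptyset$, $V(T_p)\cap V(T_q)=S$, and for any two vertices $x_1,x_2\in S$ the $(x_1,x_2)$-paths in $T_p$ and in $T_q$ are internally disjoint. $\kappa^*_G(S)$ is the maximum number of trees in a completely independent family of $S$-Steiner trees in $G$. *)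

theory Defs
  imports Main
begin

text \<open>Simple undirected graphs: a pair (vertex set, edge set), edges are 2-element sets.\<close>
type_synonym 'a graph = "'a set \<times> 'a set set"

definition is_path :: "'a set set \<Rightarrow> 'a list \<Rightarrow> bool" where
  "is_path E p \<longleftrightarrow> p \<noteq> [] \<and> distinct p \<and> (\<forall>i. Suc i < length p \<longrightarrow> {p ! i, p ! Suc i} \<in> E)"

definition path_between :: "'a set set \<Rightarrow> 'a \<Rightarrow> 'a \<Rightarrow> 'a list \<Rightarrow> bool" where
  "path_between E u v p \<longleftrightarrow> is_path E p \<and> hd p = u \<and> last p = v"

definition internal_verts :: "'a list \<Rightarrow> 'a set" where
  "internal_verts p = set p - {hd p, last p}"

definition is_cycle :: "'a set set \<Rightarrow> 'a list \<Rightarrow> bool" where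
  "is_cycle E c \<longleftrightarrow> length c \<ge> 3 \<and> is_path E c \<and> {last c, hd c} \<in> E"

definition is_graph :: "'a set \<Rightarrow> 'a set set \<Rightarrow> bool" where
  "is_graph V E \<longleftrightarrow> (\<forall>e\<in>E. \<exists>u v. e = {u, v} \<and> u \<noteq> v \<and> u \<in> V \<and> v \<in> V)"

definition is_tree :: "'a set \<Rightarrow> 'a set set \<Rightarrow> bool" where
  "is_tree V E \<longleftrightarrow> finite V \<and> V \<noteq> {} \<and> is_graph V E
     \<and> (\<forall>u\<in>V. \<forall>v\<in>V. \<exists>p. path_between E u v p \<and> set p \<subseteq> V)
     \<and> \<not> (\<exists>c. is_cycle E c)"

definition degree :: "'a set set \<Rightarrow> 'a \<Rightarrow> nat" where
  "degree E v = card {e \<in> E. v \<in> e}"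

definition steiner_tree :: "'a graph \<Rightarrow> 'a set \<Rightarrow> 'a graph \<Rightarrow> bool" where
  "steiner_tree G S T \<longleftrightarrow> fst T \<subseteq> fst G \<and> snd T \<subseteq> snd G \<and> is_tree (fst T) (snd T)
     \<and> S \<subseteq> fst T \<and> (\<forall>v\<in>fst T. degree (snd T) v = 1 \<longrightarrow> v \<in> S)"

definition compl_indep :: "'a graph \<Rightarrow> 'a set \<Rightarrow> (nat \<Rightarrow> 'a graph) \<Rightarrow> nat \<Rightarrow> bool" where
  "compl_indep G S Ts k \<longleftrightarrow>
     (\<forall>i<k. steiner_tree G S (Ts i)) \<and>
     (\<forall>p q. p < q \<and> q < k \<longrightarrow>
        snd (Ts p) \<inter> snd (Ts q) = {} \<and>
        fst (Ts p) \<inter> fst (Ts q) = S \<and>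
        (\<forall>x1\<in>S. \<forall>x2\<in>S. \<forall>P Q. path_between (snd (Ts p)) x1 x2 P \<and> path_between (snd (Ts q)) x1 x2 Q
            \<longrightarrow> internal_verts P \<inter> internal_verts Q = {}))"

definition kappa_star :: "'a graph \<Rightarrow> 'a set \<Rightarrow> nat" where
  "kappa_star G S = Max {k. \<exists>Ts. compl_indep G S Ts k}"

definition complete_bipartite :: "'a set \<Rightarrow> 'a set \<Rightarrow> 'a graph" where
  "complete_bipartite X Y = (X \<union> Y, {{x, y} | x y. x \<in> X \<and> y \<in> Y})"

end

theory Submission
  imports Defs
begin

text \<open>
  For the lower bound, take the path \<open>x1 y1 x2 y2\<close> together
  with three double stars, each built from a fresh \<open>a \<in> X - S\<close> and a fresh \<open>b \<in> Y - S\<close> with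
  edges \<open>ab\<close>, \<open>ay1\<close>, \<open>ay2\<close>, \<open>bx1\<close>, \<open>bx2\<close>. These trees pairwise meet only in \<open>S\<close>, and every
  terminal is a leaf of each double star, so no terminal is an inner vertex of \<open>S\<close>-paths in
  two of the trees.

  For the upper bound, charge an \<open>S\<close>-Steiner tree with its footprint: the number of its edge
  ends at \<open>S\<close> plus the number of its non-terminal vertices. Completely independent trees share
  neither edges nor non-terminal vertices, so their footprints add up to at most that of
  \<open>K\<^sub>5\<^sub>,\<^sub>6\<close>, namely \<open>2 * 6 + 2 * 5 + 7 = 29\<close>. Every tree has footprint at least 6: each
  terminal has positive degree, and if the tree has at most one non-terminal vertex, then that
  vertex has degree at most 2 by bipartiteness, so \<open>|E| \<ge> |V| - 1\<close> and the handshake lemma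
  force degree sum at least 6 on \<open>S\<close>. Hence \<open>6 k \<le> 29\<close>.
\<close>

lemma is_path_Cons_Cons:
  "is_path E (u # w # r) \<longleftrightarrow> {u, w} \<in> E \<and> u \<notin> set (w # r) \<and> is_path E (w # r)"
  unfolding is_path_def by (auto simp: less_Suc_eq_0_disj)

lemma is_path_singleton [simp]: "is_path E [v]"
  by (simp add: is_path_def)

lemma is_path_mono: "is_path E p \<Longrightarrow> E \<subseteq> E' \<Longrightarrow> is_path E' p"
  unfolding is_path_def by blast

lemma is_path_snoc:
  assumes "is_path E p" "{last p, v} \<in> E" "v \<notin> set p"
  shows "is_path E (p @ [v])"
  unfolding is_path_def
proof (intro conjI allI impI)
  fix i assume i: "Suc i < length (p @ [v])"
  show "{(p @ [v]) ! i, (p @ [v]) ! Suc i} \<in> E"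
  proof (cases "Suc i = length p")
    case True
    then have "i = length p - 1" by simp
    then show ?thesis using True assms(1,2) by (auto simp: nth_append last_conv_nth is_path_def)
  next
    case False
    then show ?thesis using assms(1) i by (auto simp: nth_append is_path_def)
  qed
qed (use assms in \<open>auto simp: is_path_def\<close>)

lemma is_path_rev: "is_path E p \<Longrightarrow> is_path E (rev p)"
  unfolding is_path_def
proof (intro conjI allI impI; (elim conjE)?)
  fix i assume p: "\<forall>i. Suc i < length p \<longrightarrow> {p ! i, p ! Suc i} \<in> E" and i: "Suc i < length (rev p)"
  then have "{p ! (length p - Suc (Suc i)), p ! Suc (length p - Suc (Suc i))} \<in> E" by auto
  moreover have "Suc (length p - Suc (Suc i)) = length p - Suc i" using i by auto
  ultimately show "{rev p ! i, rev p ! Suc i} \<in> E" using i by (simp add: rev_nth insert_commute)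
qed auto

lemma path_between_rev: "path_between E u v p \<Longrightarrow> path_between E v u (rev p)"
  unfolding path_between_def
  by (metis is_path_rev is_path_def hd_rev last_rev)

lemma path_crosses_boundary:
  "is_path E p \<Longrightarrow> hd p \<in> U \<Longrightarrow> last p \<notin> U \<Longrightarrow> \<exists>a b. a \<in> U \<and> b \<notin> U \<and> {a, b} \<in> E"
proof (induction p rule: induct_list012)
  case (3 u w r)
  then show ?case by (cases "w \<in> U") (auto simp: is_path_Cons_Cons)
qed (auto simp: is_path_def)

lemma internal_vert_two_neighbours:
  assumes "is_path E p" "v \<in> internal_verts p"
  shows "\<exists>u w. u \<noteq> w \<and> {u, v} \<in> E \<and> {v, w} \<in> E"
proof -
  have p: "p \<noteq> []" "distinct p" "\<And>i. Suc i < length p \<Longrightarrow> {p ! i, p ! Suc i} \<in> E"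
    using assms(1) unfolding is_path_def by auto
  obtain i where i: "i < length p" "p ! i = v" "v \<noteq> hd p" "v \<noteq> last p"
    using assms(2) by (auto simp: internal_verts_def in_set_conv_nth)
  have "i \<noteq> 0" using i p(1) hd_conv_nth by metis
  moreover have "i \<noteq> length p - 1" using i p(1) last_conv_nth by metis
  ultimately obtain j where j: "i = Suc j" "Suc i < length p" using i(1) by (cases i) auto
  have "p ! j \<noteq> p ! Suc i" using p(2) j by (simp add: nth_eq_iff_index_eq)
  then show ?thesis using p(3)[of j] p(3)[of i] i j by auto
qed

lemma cycle_vert_two_neighbours:
  assumes "is_cycle E c" "v \<in> set c"
  shows "\<exists>u w. u \<noteq> w \<and> {u, v} \<in> E \<and> {v, w} \<in> E"
proof -
  have c: "length c \<ge> 3" "distinct c" "\<And>i. Suc i < length c \<Longrightarrow> {c ! i, c ! Suc i} \<in> E"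
    and closing: "{c ! (length c - 1), c ! 0} \<in> E"
    using assms(1) unfolding is_cycle_def is_path_def by (auto simp: last_conv_nth hd_conv_nth)
  obtain i where i: "i < length c" "c ! i = v" using assms(2) by (auto simp: in_set_conv_nth)
  have "c \<noteq> []" using c(1) by auto
  have distinct_at: "c ! j \<noteq> c ! k" if "j < length c" "k < length c" "j \<noteq> k" for j k
    using c(2) that by (simp add: nth_eq_iff_index_eq)
  consider "i = 0" | "i = length c - 1" | "0 < i" "i < length c - 1" using i by linarith
  then show ?thesis
  proof cases
    case 1
    have "c ! (length c - 1) \<noteq> c ! 1" using distinct_at[of "length c - 1" 1] c(1) by simp
    then show ?thesis using c(3)[of 0] closing c(1) i 1 by (intro exI) auto
  next
    case 2
    have "Suc (length c - 2) = length c - 1" using c(1) by auto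
    then have "{c ! (length c - 2), v} \<in> E" using c(3)[of "length c - 2"] c(1) i 2 by auto
    moreover have "{v, c ! 0} \<in> E" using closing i 2 by simp
    moreover have "c ! (length c - 2) \<noteq> c ! 0" using distinct_at[of "length c - 2" 0] c(1) \<open>c \<noteq> []\<close> by simp
    ultimately show ?thesis by blast
  next
    case 3
    then obtain j where "i = Suc j" by (cases i) auto
    then show ?thesis
      using c(3)[of j] c(3)[of i] distinct_at[of j "Suc i"] 3 i
      by (intro exI[of _ "c ! j"] exI[of _ "c ! Suc i"]) auto
  qed
qed

lemma degree_ge_two_if_two_neighbours:
  assumes "finite E" "u \<noteq> w" "{u, v} \<in> E" "{v, w} \<in> E"
  shows "2 \<le> degree E v"
proof -
  have "{{u, v}, {v, w}} \<subseteq> {e \<in> E. v \<in> e}" using assms by auto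
  moreover have "card {{u, v}, {v, w}} = 2" using assms(2) by (auto simp: doubleton_eq_iff card_insert_if)
  moreover have "finite {e \<in> E. v \<in> e}" using assms(1) by simp
  ultimately show ?thesis unfolding degree_def by (metis card_mono)
qed

lemma is_graph_edge_subset: "is_graph V E \<Longrightarrow> e \<in> E \<Longrightarrow> e \<subseteq> V"
  unfolding is_graph_def by auto

lemma is_graph_finite_edges: "is_graph V E \<Longrightarrow> finite V \<Longrightarrow> finite E"
  unfolding is_graph_def by (rule finite_subset[of _ "Pow V"]) auto

lemma is_tree_is_graph: "is_tree V E \<Longrightarrow> is_graph V E \<and> finite E"
  unfolding is_tree_def using is_graph_finite_edges by blast

lemma is_tree_singleton: "is_tree {v} {}"
proof -
  have "path_between {} v v [v]" by (simp add: path_between_def)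
  moreover have "\<not> is_cycle {} c" for c
  proof
    assume "is_cycle {} c"
    then have "Suc 0 < length c" "\<forall>i. Suc i < length c \<longrightarrow> {c ! i, c ! Suc i} \<in> {}"
      unfolding is_cycle_def is_path_def by auto
    then show False by blast
  qed
  ultimately show ?thesis unfolding is_tree_def is_graph_def by auto
qed

lemma paths_within_insert_leaf:
  assumes paths: "\<forall>w\<in>V. \<forall>z\<in>V. \<exists>p. path_between E w z p \<and> set p \<subseteq> V"
    and "u \<in> V" "v \<notin> V"
  shows "\<forall>w\<in>insert v V. \<forall>z\<in>insert v V.
           \<exists>p. path_between (insert {u, v} E) w z p \<and> set p \<subseteq> insert v V"
proof -
  let ?V = "insert v V" and ?E = "insert {u, v} E"
  have old_path: "\<exists>p. path_between ?E w z p \<and> set p \<subseteq> V" if wz: "w \<in> V" "z \<in> V" for w z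
  proof -
    obtain p where "path_between E w z p" "set p \<subseteq> V" using paths wz by blast
    then show ?thesis using is_path_mono[of E p ?E] unfolding path_between_def by blast
  qed
  have to_leaf: "\<exists>p. path_between ?E w v p \<and> set p \<subseteq> ?V" if w: "w \<in> V" for w
  proof -
    obtain p where p: "path_between ?E w u p" "set p \<subseteq> V" using old_path w \<open>u \<in> V\<close> by blast
    then have "is_path ?E (p @ [v])"
      using \<open>v \<notin> V\<close> by (intro is_path_snoc) (auto simp: path_between_def)
    then have "path_between ?E w v (p @ [v])"
      using p(1) unfolding path_between_def is_path_def by (auto simp: hd_append)
    moreover have "set (p @ [v]) \<subseteq> ?V" using p(2) by auto
    ultimately show ?thesis by blast
  qed
  have "\<exists>p. path_between ?E w z p \<and> set p \<subseteq> ?V" if wz: "w \<in> ?V" "z \<in> ?V" for w z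
  proof -
    consider "w \<in> V" "z \<in> V" | "w \<in> V" "z = v" | "w = v" "z \<in> V" | "w = v" "z = v"
      using wz by auto
    then show ?thesis
    proof cases
      case 1
      then show ?thesis using old_path by blast
    next
      case 2
      then show ?thesis using to_leaf by blast
    next
      case 3
      then show ?thesis using to_leaf[of z] path_between_rev by (metis set_rev)
    next
      case 4
      then show ?thesis by (auto intro!: exI[of _ "[v]"] simp: path_between_def)
    qed
  qed
  then show ?thesis by blast
qed

lemma is_cycle_insert_leaf:
  assumes cycle: "is_cycle (insert {u, v} E) c" and "\<forall>e\<in>E. v \<notin> e" "u \<noteq> v"
  shows "is_cycle E c"
proof -
  let ?E = "insert {u, v} E"
  have "v \<notin> set c"
  proof
    assume "v \<in> set c"
    then obtain w z where wz: "w \<noteq> z" "{w, v} \<in> ?E" "{v, z} \<in> ?E"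
      using cycle_vert_two_neighbours[OF cycle] by blast
    have "{w, v} \<notin> E" "{v, z} \<notin> E" using assms(2) by blast+
    then have "{w, v} = {u, v}" "{v, z} = {u, v}" using wz by simp_all
    then have "w = u" "z = u" using \<open>u \<noteq> v\<close> by (auto simp: doubleton_eq_iff)
    then show False using wz(1) by simp
  qed
  then have old: "{a, b} \<in> E" if "{a, b} \<in> ?E" "a \<in> set c" "b \<in> set c" for a b
    using that by auto
  have path: "is_path ?E c" and "c \<noteq> []" "length c \<ge> 3" "{last c, hd c} \<in> ?E"
    using cycle unfolding is_cycle_def is_path_def by auto
  have "{c ! i, c ! Suc i} \<in> E" if "Suc i < length c" for i
    using old[of "c ! i" "c ! Suc i"] path that unfolding is_path_def by simp
  then have "is_path E c" using path unfolding is_path_def by blast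
  moreover have "{last c, hd c} \<in> E"
    using old[of "last c" "hd c"] \<open>c \<noteq> []\<close> \<open>{last c, hd c} \<in> ?E\<close> by simp
  ultimately show ?thesis using \<open>length c \<ge> 3\<close> unfolding is_cycle_def by simp
qed

lemma is_tree_add_leaf:
  assumes tree: "is_tree V E" and "u \<in> V" "v \<notin> V"
  shows "is_tree (insert v V) (insert {u, v} E)"
proof -
  have graph: "is_graph V E" and paths: "\<forall>w\<in>V. \<forall>z\<in>V. \<exists>p. path_between E w z p \<and> set p \<subseteq> V"
    and acyclic: "\<not> (\<exists>c. is_cycle E c)" and "finite V"
    using tree unfolding is_tree_def by auto
  have "u \<noteq> v" using \<open>u \<in> V\<close> \<open>v \<notin> V\<close> by blast
  have "\<forall>e\<in>E. v \<notin> e" using is_graph_edge_subset[OF graph] \<open>v \<notin> V\<close> by blast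
  then have "\<not> (\<exists>c. is_cycle (insert {u, v} E) c)"
    using is_cycle_insert_leaf[of u v E] \<open>u \<noteq> v\<close> acyclic by blast
  moreover have "is_graph (insert v V) (insert {u, v} E)" unfolding is_graph_def
  proof
    fix e assume "e \<in> insert {u, v} E"
    then show "\<exists>a b. e = {a, b} \<and> a \<noteq> b \<and> a \<in> insert v V \<and> b \<in> insert v V"
    proof
      assume "e = {u, v}"
      then show ?thesis using \<open>u \<noteq> v\<close> \<open>u \<in> V\<close> by blast
    next
      assume "e \<in> E"
      then show ?thesis using graph unfolding is_graph_def by blast
    qed
  qed
  moreover note paths_within_insert_leaf[OF paths \<open>u \<in> V\<close> \<open>v \<notin> V\<close>]
  moreover have "finite (insert v V)" using \<open>finite V\<close> by simp
  ultimately show ?thesis unfolding is_tree_def by blast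
qed

definition connected_graph :: "'a set \<Rightarrow> 'a set set \<Rightarrow> bool" where
  "connected_graph V E \<longleftrightarrow> is_graph V E \<and> (\<forall>u\<in>V. \<forall>w\<in>V. \<exists>p. path_between E u w p)"

lemma is_tree_connected_graph: "is_tree V E \<Longrightarrow> connected_graph V E"
  unfolding is_tree_def connected_graph_def by blast

lemma connected_graph_edge_across:
  assumes "connected_graph V E" "u \<in> V" "w \<in> V" "u \<in> U" "w \<notin> U"
  shows "\<exists>a b. a \<in> U \<and> b \<notin> U \<and> {a, b} \<in> E"
proof -
  obtain p where "path_between E u w p"
    using assms(1-3) unfolding connected_graph_def by blast
  then show ?thesis
    using path_crosses_boundary assms(4,5) unfolding path_between_def by blast
qed

lemma connected_graph_degree_pos:
  assumes "finite E" "connected_graph V E" "u \<in> V" "w \<in> V" "u \<noteq> w"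
  shows "0 < degree E u"
proof -
  obtain b where "{u, b} \<in> E"
    using connected_graph_edge_across[OF assms(2-4), of "{u}"] assms(5) by blast
  then have "{e \<in> E. u \<in> e} \<noteq> {}" by blast
  then show ?thesis unfolding degree_def using assms(1) by (simp add: card_gt_0_iff)
qed

lemma connected_graph_extend_by_edge:
  assumes conn: "connected_graph V E" and "finite E" "U \<subseteq> V" "u \<in> U" "w \<in> V" "w \<notin> U"
  shows "\<exists>b\<in>V - U. Suc (card {e \<in> E. e \<subseteq> U}) \<le> card {e \<in> E. e \<subseteq> insert b U}"
proof -
  obtain a b where ab: "a \<in> U" "b \<notin> U" "{a, b} \<in> E"
    using connected_graph_edge_across[OF conn _ assms(5) assms(4,6)] assms(3,4) by blast
  have "b \<in> V"
    using is_graph_edge_subset[OF _ ab(3)] conn unfolding connected_graph_def by blast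
  have "{a, b} \<notin> {e \<in> E. e \<subseteq> U}" using ab(2) by blast
  then have "Suc (card {e \<in> E. e \<subseteq> U}) = card (insert {a, b} {e \<in> E. e \<subseteq> U})"
    using \<open>finite E\<close> by simp
  also have "\<dots> \<le> card {e \<in> E. e \<subseteq> insert b U}"
    using ab \<open>finite E\<close> by (intro card_mono) auto
  finally show ?thesis using \<open>b \<in> V\<close> ab(2) by blast
qed

lemma connected_graph_card_vertices_le:
  assumes "finite V" and conn: "connected_graph V E"
  shows "card V \<le> Suc (card E)"
proof (cases "V = {}")
  case False
  have "finite E"
    using is_graph_finite_edges assms(1) conn unfolding connected_graph_def by blast
  have grow: "\<exists>U \<subseteq> V. card U = Suc k \<and> k \<le> card {e \<in> E. e \<subseteq> U}" if "k < card V" for k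
    using that
  proof (induction k)
    case 0
    obtain u where "u \<in> V" using False by blast
    then show ?case by (intro exI[of _ "{u}"]) auto
  next
    case (Suc k)
    then obtain U where U: "U \<subseteq> V" "card U = Suc k" "k \<le> card {e \<in> E. e \<subseteq> U}" by auto
    obtain u where "u \<in> U" using U(2) by (metis card.empty ex_in_conv nat.distinct(1))
    have "\<not> V \<subseteq> U" using U(1,2) Suc.prems by auto
    then obtain w where "w \<in> V" "w \<notin> U" by blast
    then obtain b where "b \<in> V - U" "Suc k \<le> card {e \<in> E. e \<subseteq> insert b U}"
      using connected_graph_extend_by_edge[OF conn \<open>finite E\<close> U(1) \<open>u \<in> U\<close>] U(3) by fastforce
    moreover have "card (insert b U) = Suc (Suc k)"
      using U(1,2) \<open>b \<in> V - U\<close> assms(1) finite_subset by fastforce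
    ultimately show ?case using U(1) by (intro exI[of _ "insert b U"]) auto
  qed
  have "card V - 1 < card V" using False assms(1) by (simp add: card_gt_0_iff)
  then obtain U where "card V - 1 \<le> card {e \<in> E. e \<subseteq> U}" using grow by blast
  also have "\<dots> \<le> card E" using \<open>finite E\<close> by (intro card_mono) auto
  finally show ?thesis by linarith
qed simp

lemma sum_degree_eq_twice_card_edges:
  assumes "is_graph V E" "finite V"
  shows "(\<Sum>v\<in>V. degree E v) = 2 * card E"
proof -
  have "finite E" using assms by (rule is_graph_finite_edges)
  have card_edge: "card {v \<in> V. v \<in> e} = 2" if "e \<in> E" for e
  proof -
    obtain a b where "e = {a, b}" "a \<noteq> b" "a \<in> V" "b \<in> V"
      using assms(1) \<open>e \<in> E\<close> unfolding is_graph_def by blast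
    then have "{v \<in> V. v \<in> e} = {a, b}" by auto
    then show ?thesis using \<open>a \<noteq> b\<close> by simp
  qed
  have "degree E v = (\<Sum>e\<in>E. if v \<in> e then 1 else 0)" for v
    unfolding degree_def card_eq_sum by (rule sum.inter_filter[OF \<open>finite E\<close>])
  then have "(\<Sum>v\<in>V. degree E v) = (\<Sum>v\<in>V. \<Sum>e\<in>E. if v \<in> e then 1 else 0)" by simp
  also have "\<dots> = (\<Sum>e\<in>E. \<Sum>v\<in>V. if v \<in> e then 1 else 0)" by (rule sum.swap)
  also have "\<dots> = (\<Sum>e\<in>E. card {v \<in> V. v \<in> e})"
  proof -
    have "card {v \<in> V. v \<in> e} = (\<Sum>v\<in>V. if v \<in> e then 1 else 0)" for e
      unfolding card_eq_sum by (rule sum.inter_filter[OF assms(2)])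
    then show ?thesis by simp
  qed
  also have "\<dots> = 2 * card E" using card_edge by simp
  finally show ?thesis .
qed

lemma connected_graph_sum_degree_ge:
  assumes "finite V" "connected_graph V E" "S \<subseteq> V" "\<And>v. v \<in> V - S \<Longrightarrow> degree E v \<le> 2"
  shows "2 * card S \<le> (\<Sum>s\<in>S. degree E s) + 2"
proof -
  have graph: "is_graph V E" using assms(2) unfolding connected_graph_def by blast
  have "(\<Sum>s\<in>S. degree E s) + (\<Sum>v\<in>V - S. degree E v) = 2 * card E"
    using sum_degree_eq_twice_card_edges[OF graph assms(1)] sum.subset_diff[OF assms(3,1)]
    by (metis add.commute)
  moreover have "(\<Sum>v\<in>V - S. degree E v) \<le> 2 * card (V - S)"
    using sum_bounded_above[of "V - S" "degree E" 2] assms(4) by simp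
  moreover have "card V = card S + card (V - S)"
    using card_Diff_subset[OF finite_subset[OF assms(3,1)] assms(3)] card_mono[OF assms(1,3)] by simp
  moreover have "card V \<le> Suc (card E)" using assms(1,2) by (rule connected_graph_card_vertices_le)
  ultimately show ?thesis by linarith
qed

definition footprint :: "'a set \<Rightarrow> 'a graph \<Rightarrow> nat" where
  "footprint S G = (\<Sum>s\<in>S. degree (snd G) s) + card (fst G - S)"

lemma compl_indep_disjoint:
  assumes "compl_indep G S Ts k" "i < k" "j < k" "i \<noteq> j"
  shows "snd (Ts i) \<inter> snd (Ts j) = {}" "fst (Ts i) \<inter> fst (Ts j) = S"
proof -
  have pair: "snd (Ts p) \<inter> snd (Ts q) = {} \<and> fst (Ts p) \<inter> fst (Ts q) = S" if "p < q" "q < k" for p q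
    using assms(1) that unfolding compl_indep_def by simp
  show "snd (Ts i) \<inter> snd (Ts j) = {}" "fst (Ts i) \<inter> fst (Ts j) = S"
    using pair[of i j] pair[of j i] assms(2-4) by (cases "i < j"; auto simp: Int_commute)+
qed

lemma compl_indep_sum_footprint_le:
  assumes indep: "compl_indep G S Ts k" and "finite (fst G)" "finite (snd G)"
  shows "(\<Sum>i<k. footprint S (Ts i)) \<le> footprint S G"
proof -
  have sub: "fst (Ts i) \<subseteq> fst G" "snd (Ts i) \<subseteq> snd G" if "i < k" for i
    using indep that unfolding compl_indep_def steiner_tree_def by auto
  have "(\<Sum>i<k. degree (snd (Ts i)) s) \<le> degree (snd G) s" for s
  proof -
    have "(\<Sum>i<k. degree (snd (Ts i)) s) = card (\<Union>i<k. {e \<in> snd (Ts i). s \<in> e})"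
      unfolding degree_def
    proof (rule card_UN_disjoint[symmetric])
      show "\<forall>i\<in>{..<k}. finite {e \<in> snd (Ts i). s \<in> e}"
        using sub assms(3) finite_subset by fastforce
      show "\<forall>i\<in>{..<k}. \<forall>j\<in>{..<k}. i \<noteq> j \<longrightarrow>
          {e \<in> snd (Ts i). s \<in> e} \<inter> {e \<in> snd (Ts j). s \<in> e} = {}"
        using compl_indep_disjoint(1)[OF indep] by blast
    qed simp
    also have "\<dots> \<le> degree (snd G) s"
      unfolding degree_def using sub assms(3) by (intro card_mono) auto
    finally show ?thesis .
  qed
  then have edges: "(\<Sum>i<k. \<Sum>s\<in>S. degree (snd (Ts i)) s) \<le> (\<Sum>s\<in>S. degree (snd G) s)"
    by (subst sum.swap) (rule sum_mono)
  have "(\<Sum>i<k. card (fst (Ts i) - S)) = card (\<Union>i<k. fst (Ts i) - S)"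
  proof (rule card_UN_disjoint[symmetric])
    show "\<forall>i\<in>{..<k}. finite (fst (Ts i) - S)"
      using sub assms(2) finite_subset by fastforce
    show "\<forall>i\<in>{..<k}. \<forall>j\<in>{..<k}. i \<noteq> j \<longrightarrow> (fst (Ts i) - S) \<inter> (fst (Ts j) - S) = {}"
      using compl_indep_disjoint(2)[OF indep] by blast
  qed simp
  also have "\<dots> \<le> card (fst G - S)"
    using sub assms(2) by (intro card_mono) auto
  finally show ?thesis
    using edges unfolding footprint_def sum.distrib by linarith
qed

lemma complete_bipartite_commute: "complete_bipartite X Y = complete_bipartite Y X"
  unfolding complete_bipartite_def by (auto simp: insert_commute)

lemma complete_bipartite_edge:
  "x \<in> X \<Longrightarrow> y \<in> Y \<Longrightarrow> {x, y} \<in> snd (complete_bipartite X Y) \<and> {y, x} \<in> snd (complete_bipartite X Y)"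
  unfolding complete_bipartite_def by (auto simp: insert_commute)

lemma degree_complete_bipartite_le:
  assumes "X \<inter> Y = {}" "finite Y" "x \<in> X"
  shows "degree (snd (complete_bipartite X Y)) x \<le> card Y"
proof -
  have "{e \<in> snd (complete_bipartite X Y). x \<in> e} \<subseteq> (\<lambda>y. {x, y}) ` Y"
    using assms(1,3) unfolding complete_bipartite_def by auto
  then have "degree (snd (complete_bipartite X Y)) x \<le> card ((\<lambda>y. {x, y}) ` Y)"
    unfolding degree_def using assms(2) by (intro card_mono) auto
  also have "\<dots> \<le> card Y" by (rule card_image_le[OF assms(2)])
  finally show ?thesis .
qed

lemma steiner_tree_complete_bipartite_degree_le:
  assumes "X \<inter> Y = {}" "finite S" "steiner_tree (complete_bipartite X Y) S T"
    and "v \<in> Y" "fst T - S \<subseteq> {v}"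
  shows "degree (snd T) v \<le> card (S \<inter> X)"
proof -
  have "is_graph (fst T) (snd T)" "snd T \<subseteq> snd (complete_bipartite X Y)"
    using assms(3) unfolding steiner_tree_def is_tree_def by auto
  have "e \<in> (\<lambda>x. {x, v}) ` (S \<inter> X)" if "e \<in> snd T" "v \<in> e" for e
  proof -
    obtain a b where ab: "e = {a, b}" "a \<in> X" "b \<in> Y"
      using \<open>snd T \<subseteq> _\<close> \<open>e \<in> snd T\<close> unfolding complete_bipartite_def by auto
    have "b = v" using ab \<open>v \<in> e\<close> assms(1,4) by blast
    have "a \<in> fst T" using is_graph_edge_subset[OF \<open>is_graph _ _\<close> \<open>e \<in> snd T\<close>] ab(1) by blast
    then have "a \<in> S" using assms(1,4,5) ab(2) by blast
    then show ?thesis using ab \<open>b = v\<close> by blast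
  qed
  then have "{e \<in> snd T. v \<in> e} \<subseteq> (\<lambda>x. {x, v}) ` (S \<inter> X)" by blast
  then have "degree (snd T) v \<le> card ((\<lambda>x. {x, v}) ` (S \<inter> X))"
    unfolding degree_def using assms(2) by (intro card_mono) auto
  also have "\<dots> \<le> card (S \<inter> X)" using assms(2) by (intro card_image_le) simp
  finally show ?thesis .
qed

lemma card_doubleton_le: "card {a, b} \<le> 2"
  by (cases "a = b") auto

lemma steiner_tree_complete_bipartite_degree_le_2:
  assumes XY: "X \<inter> Y = {}"
    and S: "x1 \<in> X" "x2 \<in> X" "y1 \<in> Y" "y2 \<in> Y"
    and T: "steiner_tree (complete_bipartite X Y) {x1, x2, y1, y2} T"
    and v: "v \<in> fst T" "fst T - {x1, x2, y1, y2} \<subseteq> {v}"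
  shows "degree (snd T) v \<le> 2"
proof -
  have "v \<in> X \<union> Y" using T v(1) unfolding steiner_tree_def complete_bipartite_def by auto
  then consider "v \<in> Y" | "v \<in> X" by blast
  then show ?thesis
  proof cases
    case 1
    have "card ({x1, x2, y1, y2} \<inter> X) \<le> card {x1, x2}"
      using XY S by (intro card_mono) auto
    then have "card ({x1, x2, y1, y2} \<inter> X) \<le> 2" using card_doubleton_le[of x1 x2] by linarith
    then show ?thesis
      using steiner_tree_complete_bipartite_degree_le[OF XY _ T 1 v(2)] by simp
  next
    case 2
    have "Y \<inter> X = {}" using XY by blast
    have "card ({x1, x2, y1, y2} \<inter> Y) \<le> card {y1, y2}"
      using XY S by (intro card_mono) auto
    then have "card ({x1, x2, y1, y2} \<inter> Y) \<le> 2" using card_doubleton_le[of y1 y2] by linarith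
    then show ?thesis
      using steiner_tree_complete_bipartite_degree_le[OF \<open>Y \<inter> X = {}\<close> _
          T[unfolded complete_bipartite_commute[of X]] 2 v(2)] by simp
  qed
qed

lemma steiner_tree_complete_bipartite_footprint_ge:
  assumes XY: "X \<inter> Y = {}"
    and S: "x1 \<in> X" "x2 \<in> X" "y1 \<in> Y" "y2 \<in> Y" "x1 \<noteq> x2" "y1 \<noteq> y2"
    and T: "steiner_tree (complete_bipartite X Y) {x1, x2, y1, y2} T"
  shows "6 \<le> footprint {x1, x2, y1, y2} T"
proof -
  define S where "S = {x1, x2, y1, y2}"
  have "card S = 4" using XY S unfolding S_def by (auto simp: card_insert_if)
  have tree: "is_tree (fst T) (snd T)" and "S \<subseteq> fst T"
    using T unfolding steiner_tree_def S_def by auto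
  have conn: "connected_graph (fst T) (snd T)" using tree by (rule is_tree_connected_graph)
  have "finite (fst T)" using tree unfolding is_tree_def by blast
  have "finite (snd T)" using is_tree_is_graph[OF tree] by blast
  have "0 < degree (snd T) s" if "s \<in> S" for s
  proof -
    obtain s' where "s' \<in> S" "s' \<noteq> s" using S(5) unfolding S_def by blast
    then show ?thesis
      using connected_graph_degree_pos[OF \<open>finite (snd T)\<close> conn] \<open>S \<subseteq> fst T\<close> that by blast
  qed
  then have "card S \<le> (\<Sum>s\<in>S. degree (snd T) s)"
    using sum_mono[of S "\<lambda>_. 1" "degree (snd T)"] by (simp add: Suc_le_eq)
  show ?thesis
  proof (cases "card (fst T - S) \<le> 1")
    case True
    have "degree (snd T) v \<le> 2" if v: "v \<in> fst T - S" for v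
    proof -
      have "fst T - S \<subseteq> {v}"
        using True v \<open>finite (fst T)\<close> by (metis card_le_Suc0_iff_eq finite_Diff One_nat_def subsetI
            singletonI)
      then show ?thesis
        using steiner_tree_complete_bipartite_degree_le_2[OF XY S(1-4) T] v unfolding S_def by blast
    qed
    then have "2 * card S \<le> (\<Sum>s\<in>S. degree (snd T) s) + 2"
      using connected_graph_sum_degree_ge[OF \<open>finite (fst T)\<close> conn \<open>S \<subseteq> fst T\<close>] by blast
    then show ?thesis using \<open>card S = 4\<close> unfolding footprint_def S_def by simp
  next
    case False
    then show ?thesis
      using \<open>card S \<le> _\<close> \<open>card S = 4\<close> unfolding footprint_def S_def by simp
  qed
qed

lemma footprint_complete_bipartite_le:
  assumes XY: "X \<inter> Y = {}" and "finite X" "finite Y"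
    and S: "x1 \<in> X" "x2 \<in> X" "y1 \<in> Y" "y2 \<in> Y" "x1 \<noteq> x2" "y1 \<noteq> y2"
  shows "footprint {x1, x2, y1, y2} (complete_bipartite X Y) + 4 \<le> 3 * (card X + card Y)"
proof -
  let ?E = "snd (complete_bipartite X Y)"
  have dist: "x1 \<noteq> y1" "x1 \<noteq> y2" "x2 \<noteq> y1" "x2 \<noteq> y2" using XY S by blast+
  have "Y \<inter> X = {}" using XY by blast
  then have deg_Y: "degree ?E y \<le> card X" if "y \<in> Y" for y
    using degree_complete_bipartite_le[of Y X y] that assms(2) complete_bipartite_commute[of X Y]
    by simp
  have deg_X: "degree ?E x \<le> card Y" if "x \<in> X" for x
    using degree_complete_bipartite_le[OF XY assms(3) that] .
  have "(\<Sum>s\<in>{x1, x2, y1, y2}. degree ?E s) = degree ?E x1 + degree ?E x2 + degree ?E y1 + degree ?E y2"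
    using S dist by simp
  then have "(\<Sum>s\<in>{x1, x2, y1, y2}. degree ?E s) \<le> 2 * card Y + 2 * card X"
    using deg_X[OF S(1)] deg_X[OF S(2)] deg_Y[OF S(3)] deg_Y[OF S(4)] by linarith
  moreover have "card {x1, x2} \<le> card X" "card {y1, y2} \<le> card Y"
    using S assms(2,3) by (intro card_mono; simp)+
  then have "card (X \<union> Y - {x1, x2, y1, y2}) + 4 = card X + card Y"
    using XY S dist assms(2,3) by (simp add: card_Diff_subset card_Un_disjoint card_insert_if)
  ultimately show ?thesis unfolding footprint_def complete_bipartite_def by simp
qed

lemma compl_indep_complete_bipartite_le:
  assumes XY: "X \<inter> Y = {}" and "finite X" "finite Y"
    and S: "x1 \<in> X" "x2 \<in> X" "y1 \<in> Y" "y2 \<in> Y" "x1 \<noteq> x2" "y1 \<noteq> y2"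
    and indep: "compl_indep (complete_bipartite X Y) {x1, x2, y1, y2} Ts k"
  shows "6 * k + 4 \<le> 3 * (card X + card Y)"
proof -
  let ?G = "complete_bipartite X Y" and ?S = "{x1, x2, y1, y2}"
  have "snd ?G = (\<lambda>(x, y). {x, y}) ` (X \<times> Y)" unfolding complete_bipartite_def by auto
  then have "finite (snd ?G)" using assms(2,3) by simp
  have "6 * k = (\<Sum>i<k. 6)" by simp
  also have "\<dots> \<le> (\<Sum>i<k. footprint ?S (Ts i))"
    using steiner_tree_complete_bipartite_footprint_ge[OF XY S] indep
    unfolding compl_indep_def by (intro sum_mono) simp
  also have "\<dots> \<le> footprint ?S ?G"
    using compl_indep_sum_footprint_le[OF indep] \<open>finite (snd ?G)\<close> assms(2,3)
    by (simp add: complete_bipartite_def)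
  finally show ?thesis using footprint_complete_bipartite_le[OF XY assms(2,3) S] by linarith
qed

definition double_star :: "'a \<Rightarrow> 'a \<Rightarrow> 'a \<Rightarrow> 'a \<Rightarrow> 'a \<Rightarrow> 'a \<Rightarrow> 'a graph" where
  "double_star a b u1 u2 w1 w2 =
     ({a, b, u1, u2, w1, w2}, {{a, b}, {a, u1}, {a, u2}, {b, w1}, {b, w2}})"

lemma is_tree_double_star:
  assumes "distinct [a, b, u1, u2, w1, w2]"
  shows "is_tree (fst (double_star a b u1 u2 w1 w2)) (snd (double_star a b u1 u2 w1 w2))"
proof -
  have "double_star a b u1 u2 w1 w2 = ({w2, w1, u2, u1, b, a}, {{b, w2}, {b, w1}, {a, u2}, {a, u1}, {a, b}})"
    unfolding double_star_def by auto
  moreover have "is_tree {w2, w1, u2, u1, b, a} {{b, w2}, {b, w1}, {a, u2}, {a, u1}, {a, b}}"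
    using assms by (intro is_tree_add_leaf is_tree_singleton) auto
  ultimately show ?thesis by simp
qed

lemma degree_double_star:
  assumes "distinct [a, b, u1, u2, w1, w2]"
  shows "degree (snd (double_star a b u1 u2 w1 w2)) a = 3"
    "degree (snd (double_star a b u1 u2 w1 w2)) b = 3"
    "s \<in> {u1, u2, w1, w2} \<Longrightarrow> degree (snd (double_star a b u1 u2 w1 w2)) s = 1"
proof -
  let ?E = "snd (double_star a b u1 u2 w1 w2)"
  have "{e \<in> ?E. a \<in> e} = {{a, b}, {a, u1}, {a, u2}}" "{e \<in> ?E. b \<in> e} = {{a, b}, {b, w1}, {b, w2}}"
    using assms by (auto simp: double_star_def)
  then show "degree ?E a = 3" "degree ?E b = 3"
    using assms unfolding degree_def by (simp_all add: doubleton_eq_iff)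
  assume "s \<in> {u1, u2, w1, w2}"
  then have "\<exists>c. {e \<in> ?E. s \<in> e} = {{c, s}}"
    using assms by (auto simp: double_star_def)
  then obtain c where "{e \<in> ?E. s \<in> e} = {{c, s}}" by blast
  then show "degree ?E s = 1" unfolding degree_def by simp
qed

lemma steiner_tree_double_star:
  assumes XY: "X \<inter> Y = {}" and "x1 \<in> X" "x2 \<in> X" "y1 \<in> Y" "y2 \<in> Y" "x1 \<noteq> x2" "y1 \<noteq> y2"
    and "a \<in> X - {x1, x2}" "b \<in> Y - {y1, y2}"
  shows "steiner_tree (complete_bipartite X Y) {x1, x2, y1, y2} (double_star a b y1 y2 x1 x2)"
proof -
  have dist: "distinct [a, b, y1, y2, x1, x2]" using assms by auto
  show ?thesis
    unfolding steiner_tree_def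
  proof (intro conjI)
    show "snd (double_star a b y1 y2 x1 x2) \<subseteq> snd (complete_bipartite X Y)"
      using assms by (simp add: double_star_def complete_bipartite_edge)
    show "fst (double_star a b y1 y2 x1 x2) \<subseteq> fst (complete_bipartite X Y)"
      using assms by (simp add: double_star_def complete_bipartite_def)
    show "\<forall>v\<in>fst (double_star a b y1 y2 x1 x2).
        degree (snd (double_star a b y1 y2 x1 x2)) v = 1 \<longrightarrow> v \<in> {x1, x2, y1, y2}"
      using degree_double_star(1,2)[OF dist] unfolding double_star_def by auto
  qed (use is_tree_double_star[OF dist] in \<open>auto simp: double_star_def\<close>)
qed

(* The path is listed from its last vertex backwards, so that is_tree_add_leaf applies directly. *)
lemma steiner_tree_complete_bipartite_path:
  assumes XY: "X \<inter> Y = {}" and S: "x1 \<in> X" "x2 \<in> X" "y1 \<in> Y" "y2 \<in> Y" "x1 \<noteq> x2" "y1 \<noteq> y2"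
  shows "steiner_tree (complete_bipartite X Y) {x1, x2, y1, y2}
           ({y2, x2, y1, x1}, {{x2, y2}, {y1, x2}, {x1, y1}})"
proof -
  have "distinct [x1, y1, x2, y2]" using XY S by auto
  then have "is_tree {y2, x2, y1, x1} {{x2, y2}, {y1, x2}, {x1, y1}}"
    by (intro is_tree_add_leaf is_tree_singleton) auto
  moreover have "{{x2, y2}, {y1, x2}, {x1, y1}} \<subseteq> snd (complete_bipartite X Y)"
    using S by (simp add: complete_bipartite_edge)
  moreover have "{y2, x2, y1, x1} \<subseteq> fst (complete_bipartite X Y)"
    using S unfolding complete_bipartite_def by simp
  ultimately show ?thesis unfolding steiner_tree_def by auto
qed

definition compl_indep_pair :: "'a set \<Rightarrow> 'a graph \<Rightarrow> 'a graph \<Rightarrow> bool" where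
  "compl_indep_pair S T T' \<longleftrightarrow>
     snd T \<inter> snd T' = {} \<and> fst T \<inter> fst T' = S \<and>
     (\<forall>x1\<in>S. \<forall>x2\<in>S. \<forall>P Q. path_between (snd T) x1 x2 P \<and> path_between (snd T') x1 x2 Q
        \<longrightarrow> internal_verts P \<inter> internal_verts Q = {})"

lemma compl_indep_iff_pairs:
  "compl_indep G S Ts k \<longleftrightarrow>
     (\<forall>i<k. steiner_tree G S (Ts i)) \<and> (\<forall>p q. p < q \<and> q < k \<longrightarrow> compl_indep_pair S (Ts p) (Ts q))"
  unfolding compl_indep_def compl_indep_pair_def by (rule refl)

lemma compl_indep_pair_if_terminals_leaves:
  assumes "is_graph (fst T) (snd T)" "is_graph (fst T') (snd T')" "finite (snd T')"
    and "snd T \<inter> snd T' = {}" "fst T \<inter> fst T' = S" "\<And>s. s \<in> S \<Longrightarrow> degree (snd T') s \<le> 1"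
  shows "compl_indep_pair S T T'"
proof -
  have "w \<notin> internal_verts Q"
    if P: "is_path (snd T) P" "w \<in> internal_verts P" and Q: "is_path (snd T') Q" for P Q w
  proof
    assume "w \<in> internal_verts Q"
    then obtain u u' where "u \<noteq> u'" "{u, w} \<in> snd T'" "{w, u'} \<in> snd T'"
      using internal_vert_two_neighbours[OF Q] by blast
    then have "2 \<le> degree (snd T') w" "w \<in> fst T'"
      using degree_ge_two_if_two_neighbours[OF assms(3)] is_graph_edge_subset[OF assms(2)] by blast+
    moreover obtain v where "{v, w} \<in> snd T"
      using internal_vert_two_neighbours[OF P] by blast
    then have "w \<in> fst T" using is_graph_edge_subset[OF assms(1)] by blast
    ultimately show False using assms(5,6) by fastforce
  qed
  then show ?thesis using assms(4,5) unfolding compl_indep_pair_def path_between_def by blast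
qed

lemma is_graph_edges_disjoint:
  "is_graph V E \<Longrightarrow> (\<And>e. e \<in> E' \<Longrightarrow> \<not> e \<subseteq> V) \<Longrightarrow> E \<inter> E' = {}"
  using is_graph_edge_subset by blast

lemma compl_indep_pair_double_star:
  assumes "is_graph (fst T) (snd T)" "distinct [a, b, u1, u2, w1, w2]"
    and "a \<notin> fst T" "b \<notin> fst T" "{u1, u2, w1, w2} \<subseteq> fst T"
  shows "compl_indep_pair {u1, u2, w1, w2} T (double_star a b u1 u2 w1 w2)"
proof (rule compl_indep_pair_if_terminals_leaves[OF assms(1)])
  let ?D = "double_star a b u1 u2 w1 w2"
  show "is_graph (fst ?D) (snd ?D)" "finite (snd ?D)"
    using is_tree_is_graph[OF is_tree_double_star[OF assms(2)]] by simp_all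
  show "snd T \<inter> snd ?D = {}"
    by (rule is_graph_edges_disjoint[OF assms(1)]) (use assms(3,4) in \<open>auto simp: double_star_def\<close>)
  show "fst T \<inter> fst ?D = {u1, u2, w1, w2}"
    using assms(3-5) by (auto simp: double_star_def)
  show "degree (snd ?D) s \<le> 1" if "s \<in> {u1, u2, w1, w2}" for s
    using degree_double_star(3)[OF assms(2) that] by simp
qed

lemma compl_indep_case_nat:
  assumes "steiner_tree G S T" "\<And>j. j < m \<Longrightarrow> steiner_tree G S (Ts j)"
    and "\<And>j. j < m \<Longrightarrow> compl_indep_pair S T (Ts j)"
    and "\<And>i j. i < j \<Longrightarrow> j < m \<Longrightarrow> compl_indep_pair S (Ts i) (Ts j)"
  shows "compl_indep G S (case_nat T Ts) (Suc m)"
  unfolding compl_indep_iff_pairs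
proof (intro conjI allI impI; (elim conjE)?)
  fix i assume "i < Suc m"
  then show "steiner_tree G S (case_nat T Ts i)" using assms(1,2) by (cases i) auto
next
  fix p q assume "p < q" "q < Suc m"
  then show "compl_indep_pair S (case_nat T Ts p) (case_nat T Ts q)"
    using assms(3,4) by (cases p; cases q) auto
qed

lemma compl_indep_complete_bipartite_exists:
  assumes XY: "X \<inter> Y = {}" and "finite X" "finite Y"
    and S: "x1 \<in> X" "x2 \<in> X" "y1 \<in> Y" "y2 \<in> Y" "x1 \<noteq> x2" "y1 \<noteq> y2"
    and m: "m \<le> card (X - {x1, x2})" "m \<le> card (Y - {y1, y2})"
  shows "\<exists>Ts. compl_indep (complete_bipartite X Y) {x1, x2, y1, y2} Ts (Suc m)"
proof -
  let ?S = "{x1, x2, y1, y2}"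
  obtain a where a: "a ` {..<m} \<subseteq> X - {x1, x2}" "inj_on a {..<m}"
    using card_le_inj[of "{..<m}" "X - {x1, x2}"] m(1) assms(2) by auto
  obtain b where b: "b ` {..<m} \<subseteq> Y - {y1, y2}" "inj_on b {..<m}"
    using card_le_inj[of "{..<m}" "Y - {y1, y2}"] m(2) assms(3) by auto
  define P where "P = ({y2, x2, y1, x1}, {{x2, y2}, {y1, x2}, {x1, y1}})"
  define D where "D j = double_star (a j) (b j) y1 y2 x1 x2" for j
  have ab: "a j \<in> X - {x1, x2}" "b j \<in> Y - {y1, y2}" if "j < m" for j
    using a(1) b(1) that by auto
  then have ab_S: "a j \<notin> ?S" "b j \<notin> ?S" if "j < m" for j
    using XY S that by auto
  have dist: "distinct [a j, b j, y1, y2, x1, x2]" if "j < m" for j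
    using ab[OF that] XY S by auto
  have "{y1, y2, x1, x2} = ?S" by auto
  then have pair_D: "compl_indep_pair ?S T (D j)"
    if "j < m" "is_graph (fst T) (snd T)" "a j \<notin> fst T" "b j \<notin> fst T" "?S \<subseteq> fst T" for T j
    using compl_indep_pair_double_star[OF that(2) dist[OF that(1)] that(3,4)] that(5)
    unfolding D_def by simp
  have P_tree: "steiner_tree (complete_bipartite X Y) ?S P"
    unfolding P_def by (rule steiner_tree_complete_bipartite_path[OF XY S])
  have D_tree: "steiner_tree (complete_bipartite X Y) ?S (D j)" if "j < m" for j
    unfolding D_def using steiner_tree_double_star[OF XY S] ab[OF that] by blast
  have "compl_indep (complete_bipartite X Y) ?S (case_nat P D) (Suc m)"
  proof (rule compl_indep_case_nat[OF P_tree D_tree])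
    show "compl_indep_pair ?S P (D j)" if "j < m" for j
      using pair_D[OF that] ab_S[OF that] P_tree
      unfolding steiner_tree_def is_tree_def by (auto simp: P_def)
    show "compl_indep_pair ?S (D i) (D j)" if "i < j" "j < m" for i j
    proof -
      have "a i \<noteq> a j" "b i \<noteq> b j" using that a(2) b(2) by (auto dest: inj_onD)
      then have "a j \<notin> fst (D i)" "b j \<notin> fst (D i)"
        using ab[of i] ab[of j] XY S that unfolding D_def double_star_def by auto
      then show ?thesis
        using pair_D[OF that(2)] D_tree[of i] that unfolding steiner_tree_def is_tree_def by auto
    qed
  qed
  then show ?thesis by blast
qed

lemma kappa_star_eqI:
  assumes "\<exists>Ts. compl_indep G S Ts k" "\<And>Ts k'. compl_indep G S Ts k' \<Longrightarrow> k' \<le> k"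
  shows "kappa_star G S = k"
proof -
  have "{k. \<exists>Ts. compl_indep G S Ts k} \<subseteq> {..k}" using assms(2) by blast
  then have "finite {k. \<exists>Ts. compl_indep G S Ts k}" by (rule finite_subset) simp
  moreover have "k \<in> {k. \<exists>Ts. compl_indep G S Ts k}" using assms(1) by blast
  ultimately show ?thesis unfolding kappa_star_def using assms(2) by (intro Max_eqI) blast+
qed

theorem lemma3p9:
  fixes x y :: "nat \<Rightarrow> 'a"
  assumes "inj_on x {1..5}" and "inj_on y {1..6}"
    and "x ` {1..5} \<inter> y ` {1..6} = {}"
  shows "kappa_star (complete_bipartite (x ` {1..5}) (y ` {1..6})) {x 1, x 2, y 1, y 2} = 4"
proof -
  let ?X = "x ` {1..5}" and ?Y = "y ` {1..6}"
  have "x 1 \<noteq> x 2" using inj_onD[OF assms(1), of 1 2] by auto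
  moreover have "y 1 \<noteq> y 2" using inj_onD[OF assms(2), of 1 2] by auto
  ultimately have S: "x 1 \<in> ?X" "x 2 \<in> ?X" "y 1 \<in> ?Y" "y 2 \<in> ?Y" "x 1 \<noteq> x 2" "y 1 \<noteq> y 2"
    by auto
  have card: "card ?X = 5" "card ?Y = 6" using assms(1,2) by (simp_all add: card_image)
  have "finite ?X" "finite ?Y" by simp_all
  have "card (?X - {x 1, x 2}) = 3" "card (?Y - {y 1, y 2}) = 4"
    using S card by (simp_all add: card_Diff_subset)
  then have "\<exists>Ts. compl_indep (complete_bipartite ?X ?Y) {x 1, x 2, y 1, y 2} Ts (Suc 3)"
    by (intro compl_indep_complete_bipartite_exists[OF assms(3) \<open>finite ?X\<close> \<open>finite ?Y\<close> S]) simp_all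
  moreover have "Suc 3 = (4 :: nat)" by simp
  moreover have "k \<le> 4" if "compl_indep (complete_bipartite ?X ?Y) {x 1, x 2, y 1, y 2} Ts k" for Ts k
    using compl_indep_complete_bipartite_le[OF assms(3) \<open>finite ?X\<close> \<open>finite ?Y\<close> S that] card by simp
  ultimately show ?thesis using kappa_star_eqI by metis
qed

end
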